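(* Let $(\mathfrak g,[\cdot,\cdot]_{\mathfrak g},E,S)$ be a quadratic ENL algebra and $K:\mathfrak g^*\to\mathfrak g$ a linear map. Then $K$ is an ENE-relative Rota–Baxter operator on $(\mathfrak g,[\cdot,\cdot]_{\mathfrak g},E)$ with respect to the coadjoint ENE-representation $(\mathfrak g^*;E^*,\mathrm{ad}^* )$ if and only if $B:=K\circ S^\sharp:\mathfrak g\to\mathfrak g$ is a Rota–Baxter operator of weight $0$ on the ENL algebra $(\mathfrak g,[\cdot,\cdot]_{\mathfrak g},E)$, i.e. $[Bx,By]_{\mathfrak g}=B([Bx,y]_{\mathfrak g}+[x,By]_{\mathfrak g})$ for all $x,y$ and $E\circ B=B\circ E$.
   Context: Vector spaces are finite-dimensional over an algebraically closed field of characteristic zero. An ENL algebra is a Lie algebra with linear $E$ satisfying $E[x,y]=[x,Ey]$ for all $x,y$. A quadratic ENL algebra $(\mathfrak g,E,S)$ is an ENL algebra with nondegenerate symmetric bilinear form $S$ such that $S([x,y],z)+S(y,[x,z])=0$ and $S(Ex,y)=S(x,Ey)$; $S^\sharp:\mathfrak g\to\mathfrak g^*$ is $\langle S^\sharp x,y\rangle=S(x,y)$. Coadjoint: $\langle\mathrm{ad}^*_x\xi,y\rangle=-\langle\xi,[x,y]\rangle$, $E^*$ the dual map. An ENE-relative Rota–Baxter operator with respect to $(\mathfrak g^*;E^*,\mathrm{ad}^* )$ is a linear $K:\mathfrak g^*\to\mathfrak g$ with $[K\xi,K\eta]_{\mathfrak g}=K(\mathrm{ad}^*_{K\xi}\eta-\mathrm{ad}^*_{K\eta}\xi)$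 for all $\xi,\eta$ and $E\circ K=K\circ E^*$. *)

theory Defs
  imports "HOL-Computational_Algebra.Polynomial"
begin

definition alg_closed_field :: "'k::field itself \<Rightarrow> bool" where
  "alg_closed_field _ \<longleftrightarrow> (\<forall>p :: 'k poly. 0 < degree p \<longrightarrow> (\<exists>x. poly p x = 0))"

definition fd_vector_space :: "('k::field \<Rightarrow> 'v::ab_group_add \<Rightarrow> 'v) \<Rightarrow> bool" where
  "fd_vector_space sc \<longleftrightarrow> vector_space sc \<and> (\<exists>B. finite B \<and> module.span sc B = UNIV)"

definition is_dual :: "('k::field \<Rightarrow> 'v::ab_group_add \<Rightarrow> 'v) \<Rightarrow> ('v \<Rightarrow> 'k) \<Rightarrow> bool" where
  "is_dual sc \<xi> \<longleftrightarrow> Vector_Spaces.linear sc ((*)) \<xi>"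

definition dual_linear :: "('k::field \<Rightarrow> 'v::ab_group_add \<Rightarrow> 'v) \<Rightarrow> (('v \<Rightarrow> 'k) \<Rightarrow> 'v) \<Rightarrow> bool" where
  "dual_linear sc K \<longleftrightarrow>
     (\<forall>\<xi> \<eta>. is_dual sc \<xi> \<longrightarrow> is_dual sc \<eta> \<longrightarrow> K (\<lambda>x. \<xi> x + \<eta> x) = K \<xi> + K \<eta>) \<and>
     (\<forall>\<xi> c. is_dual sc \<xi> \<longrightarrow> K (\<lambda>x. c * \<xi> x) = sc c (K \<xi>))"

definition bilinear_map :: "('k::field \<Rightarrow> 'v::ab_group_add \<Rightarrow> 'v) \<Rightarrow> ('k \<Rightarrow> 'w::ab_group_add \<Rightarrow> 'w) \<Rightarrow> ('v \<Rightarrow> 'v \<Rightarrow> 'w) \<Rightarrow> bool" where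
  "bilinear_map sc sw f \<longleftrightarrow> (\<forall>x. Vector_Spaces.linear sc sw (f x)) \<and> (\<forall>y. Vector_Spaces.linear sc sw (\<lambda>x. f x y))"

definition lie_algebra :: "('k::field \<Rightarrow> 'v::ab_group_add \<Rightarrow> 'v) \<Rightarrow> ('v \<Rightarrow> 'v \<Rightarrow> 'v) \<Rightarrow> bool" where
  "lie_algebra sc br \<longleftrightarrow> bilinear_map sc sc br \<and> (\<forall>x. br x x = 0) \<and>
     (\<forall>x y z. br x (br y z) + br y (br z x) + br z (br x y) = 0)"

definition ENL_algebra :: "('k::field \<Rightarrow> 'v::ab_group_add \<Rightarrow> 'v) \<Rightarrow> ('v \<Rightarrow> 'v \<Rightarrow> 'v) \<Rightarrow> ('v \<Rightarrow> 'v) \<Rightarrow> bool" where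
  "ENL_algebra sc br E \<longleftrightarrow> lie_algebra sc br \<and> Vector_Spaces.linear sc sc E \<and>
     (\<forall>x y. E (br x y) = br x (E y))"

definition quadratic_ENL :: "('k::field \<Rightarrow> 'v::ab_group_add \<Rightarrow> 'v) \<Rightarrow> ('v \<Rightarrow> 'v \<Rightarrow> 'v) \<Rightarrow> ('v \<Rightarrow> 'v) \<Rightarrow> ('v \<Rightarrow> 'v \<Rightarrow> 'k) \<Rightarrow> bool" where
  "quadratic_ENL sc br E S \<longleftrightarrow> ENL_algebra sc br E \<and> bilinear_map sc ((*)) S \<and>
     (\<forall>x y. S x y = S y x) \<and> (\<forall>x. (\<forall>y. S x y = 0) \<longrightarrow> x = 0) \<and>
     (\<forall>x y z. S (br x y) z + S y (br x z) = 0) \<and> (\<forall>x y. S (E x) y = S x (E y))"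

definition S_sharp :: "('v \<Rightarrow> 'v \<Rightarrow> 'k) \<Rightarrow> 'v \<Rightarrow> ('v \<Rightarrow> 'k)" where
  "S_sharp S x = (\<lambda>y. S x y)"

definition coad :: "('v \<Rightarrow> 'v \<Rightarrow> 'v) \<Rightarrow> 'v \<Rightarrow> ('v \<Rightarrow> 'k::ab_group_add) \<Rightarrow> ('v \<Rightarrow> 'k)" where
  "coad br x \<xi> = (\<lambda>y. - \<xi> (br x y))"

definition dual_map :: "('v \<Rightarrow> 'v) \<Rightarrow> ('v \<Rightarrow> 'k) \<Rightarrow> ('v \<Rightarrow> 'k)" where
  "dual_map E \<xi> = (\<lambda>y. \<xi> (E y))"

definition ENE_relative_RB_coad ::
  "('k::field \<Rightarrow> 'v::ab_group_add \<Rightarrow> 'v) \<Rightarrow> ('v \<Rightarrow> 'v \<Rightarrow> 'v) \<Rightarrow> ('v \<Rightarrow> 'v) \<Rightarrow> (('v \<Rightarrow> 'k) \<Rightarrow> 'v) \<Rightarrow> bool" where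
  "ENE_relative_RB_coad sc br E K \<longleftrightarrow> dual_linear sc K \<and>
     (\<forall>\<xi> \<eta>. is_dual sc \<xi> \<longrightarrow> is_dual sc \<eta> \<longrightarrow>
        br (K \<xi>) (K \<eta>) = K (\<lambda>y. coad br (K \<xi>) \<eta> y - coad br (K \<eta>) \<xi> y)) \<and>
     (\<forall>\<xi>. is_dual sc \<xi> \<longrightarrow> E (K \<xi>) = K (dual_map E \<xi>))"

definition RB_weight0_ENL ::
  "('k::field \<Rightarrow> 'v::ab_group_add \<Rightarrow> 'v) \<Rightarrow> ('v \<Rightarrow> 'v \<Rightarrow> 'v) \<Rightarrow> ('v \<Rightarrow> 'v) \<Rightarrow> ('v \<Rightarrow> 'v) \<Rightarrow> bool" where
  "RB_weight0_ENL sc br E B \<longleftrightarrow> Vector_Spaces.linear sc sc B \<and>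
     (\<forall>x y. br (B x) (B y) = B (br (B x) y + br x (B y))) \<and> E \<circ> B = B \<circ> E"

end

theory Submission
  imports Defs
begin

(* Finite dimension and nondegeneracy make S# a linear bijection from g onto g*, so K is
   determined by B = K o S#, and the quantifiers over g* in the definition of an ENE-relative
   Rota-Baxter operator may be taken over elements S# x.  Invariance of S says that S#
   intertwines ad with ad*, and self-adjointness of E that it intertwines E with E*.  Hence
   ad*_{B x} (S# y) - ad*_{B y} (S# x) = S# ([B x, y] + [x, B y]) by antisymmetry of the bracket,
   and both defining identities of K become exactly those of B. *)

lemma finite_span_obtains_finite_basis:
  assumes "vector_space sc" and "finite A" and "module.span sc A = UNIV"
  obtains B where "finite_dimensional_vector_space sc B"
proof -
  interpret vector_space sc by fact
  obtain B where B: "B \<subseteq> A" "independent B" "A \<subseteq> span B"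
    using maximal_independent_subset[of A] by blast
  have "span B = UNIV"
    using span_mono[OF B(3)] assms(3) by (auto simp: span_span)
  with B \<open>finite A\<close> have "finite_dimensional_vector_space sc B"
    by unfold_locales (auto intro: finite_subset)
  then show thesis by (rule that)
qed

lemma (in finite_dimensional_vector_space) nondegenerate_form_represents_functional:
  fixes S :: "'b \<Rightarrow> 'b \<Rightarrow> 'a"
  assumes bil: "bilinear_map scale (*) S"
    and nondeg: "\<forall>x. (\<forall>y. S x y = 0) \<longrightarrow> x = 0"
    and \<xi>: "Vector_Spaces.linear scale (*) \<xi>"
  shows "\<exists>x. S x = \<xi>"
proof -
  interpret P: vector_space_pair scale "(*) :: 'a \<Rightarrow> 'a \<Rightarrow> 'a"
    by unfold_locales (auto simp: algebra_simps)
  have S_left: "Vector_Spaces.linear scale (*) (\<lambda>x. S x y)"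
    and S_right: "Vector_Spaces.linear scale (*) (S x)" for x y
    using bil by (auto simp: bilinear_map_def)
  have eq_on_Basis: "f = g"
    if "Vector_Spaces.linear scale (*) f" "Vector_Spaces.linear scale (*) g"
      and "\<forall>b\<in>Basis. f b = g b" for f g
    by (rule ext, rule P.linear_eq_on[OF that(1,2)]) (use that(3) span_Basis in auto)
  have coeffs_eq: "\<forall>b\<in>Basis. u b = v b"
    if "(\<Sum>b\<in>Basis. u b *s b) = (\<Sum>b\<in>Basis. v b *s b)" for u v
  proof -
    have "(\<Sum>b\<in>Basis. (u b - v b) *s b) = 0"
      using that by (simp add: scale_left_diff_distrib sum_subtractf)
    moreover have "\<not> (\<exists>w. (\<exists>b\<in>Basis. w b \<noteq> 0) \<and> (\<Sum>b\<in>Basis. w b *s b) = 0)"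
      using dependent_finite[OF finite_Basis] independent_Basis by simp
    ultimately show ?thesis
      by (auto dest: spec[of _ "\<lambda>b. u b - v b"])
  qed
  txt \<open>T is injective by nondegeneracy, hence onto; a preimage x of the vector with
    coordinates \<xi> b then satisfies S x b = \<xi> b on the basis.\<close>
  define T where "T x = (\<Sum>b\<in>Basis. S x b *s b)" for x
  have T: "Vector_Spaces.linear scale scale T"
  proof -
    interpret Q: vector_space_pair scale scale ..
    show ?thesis
      unfolding T_def
      by (intro Q.linear_compose_sum ballI
          Vector_Spaces.linear_compose[OF S_left linear_scale_left, unfolded o_def])
  qed
  have "inj T"
  proof -
    interpret T: Vector_Spaces.linear scale scale T by (fact T)
    have "x = 0" if "T x = 0" for x
    proof -
      have "\<forall>b\<in>Basis. S x b = 0"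
        using coeffs_eq[of "\<lambda>b. S x b" "\<lambda>_. 0"] that by (simp add: T_def)
      then have "S x = (\<lambda>_. 0)"
        by (intro eq_on_Basis S_right P.linear_zero) auto
      then show ?thesis using nondeg by simp
    qed
    then show ?thesis by (simp add: T.inj_iff_eq_0)
  qed
  then obtain x where "T x = (\<Sum>b\<in>Basis. \<xi> b *s b)"
    using linear_inj_imp_surj[OF T] by (metis surjD)
  then have "\<forall>b\<in>Basis. S x b = \<xi> b"
    unfolding T_def by (rule coeffs_eq)
  then show ?thesis
    using eq_on_Basis[OF S_right \<xi>] by blast
qed

lemma is_dual_S_sharp:
  assumes "bilinear_map sc (*) S"
  shows "is_dual sc (S_sharp S x)"
  using assms by (simp add: bilinear_map_def is_dual_def S_sharp_def)

lemma is_dual_obtains_S_sharp: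
  assumes "fd_vector_space sc" and "bilinear_map sc (*) S"
    and "\<forall>x. (\<forall>y. S x y = 0) \<longrightarrow> x = 0" and "is_dual sc \<xi>"
  obtains x where "\<xi> = S_sharp S x"
proof -
  obtain A where "vector_space sc" "finite A" "module.span sc A = UNIV"
    using assms(1) by (auto simp: fd_vector_space_def)
  then obtain B where "finite_dimensional_vector_space sc B"
    by (rule finite_span_obtains_finite_basis)
  then obtain x where "S x = \<xi>"
    using finite_dimensional_vector_space.nondegenerate_form_represents_functional assms(2-4)
    unfolding is_dual_def by blast
  then have "\<xi> = S_sharp S x"
    by (simp add: S_sharp_def)
  then show thesis
    by (rule that)
qed

lemma all_is_dual_iff_all_S_sharp:
  assumes "fd_vector_space sc" and "bilinear_map sc (*) S"
    and "\<forall>x. (\<forall>y. S x y = 0) \<longrightarrow> x = 0"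
  shows "(\<forall>\<xi>. is_dual sc \<xi> \<longrightarrow> P \<xi>) \<longleftrightarrow> (\<forall>x. P (S_sharp S x))"
  using is_dual_obtains_S_sharp[OF assms] is_dual_S_sharp[OF assms(2)] by metis

lemma linear_comp_S_sharp:
  assumes "vector_space sc" and "bilinear_map sc (*) S" and "dual_linear sc K"
  shows "Vector_Spaces.linear sc sc (K \<circ> S_sharp S)"
proof -
  interpret S_left: Vector_Spaces.linear sc "(*)" "\<lambda>x. S x y" for y
    using assms(2) by (simp add: bilinear_map_def)
  have "S_sharp S (x + y) = (\<lambda>z. S_sharp S x z + S_sharp S y z)"
    and "S_sharp S (sc c x) = (\<lambda>z. c * S_sharp S x z)" for x y c
    by (simp_all add: S_sharp_def fun_eq_iff S_left.add S_left.scale)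
  then show ?thesis
    using assms is_dual_S_sharp[OF assms(2)]
    by (simp add: Vector_Spaces.linear_iff dual_linear_def)
qed

lemma lie_algebra_anticomm:
  assumes "lie_algebra sc br"
  shows "br y x = - br x y"
proof -
  interpret left: Vector_Spaces.linear sc sc "\<lambda>x. br x z" for z
    using assms by (simp add: lie_algebra_def bilinear_map_def)
  interpret right: Vector_Spaces.linear sc sc "br z" for z
    using assms by (simp add: lie_algebra_def bilinear_map_def)
  have alt: "br z z = 0" for z
    using assms by (simp add: lie_algebra_def)
  have "br (x + y) (x + y) = br x x + br x y + (br y x + br y y)"
    by (simp only: left.add right.add ac_simps)
  then have "br x y + br y x = 0"
    by (simp add: alt)
  then show ?thesis
    by (metis minus_unique)
qed

lemma coad_S_sharp:
  assumes "\<forall>x y z. S (br x y) z + S y (br x z) = 0"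
  shows "coad br x (S_sharp S y) = S_sharp S (br x y)"
proof
  fix z
  have "S (br x y) z = - S y (br x z)"
    using assms by (simp add: eq_neg_iff_add_eq_0)
  then show "coad br x (S_sharp S y) z = S_sharp S (br x y) z"
    by (simp add: coad_def S_sharp_def)
qed

lemma dual_map_S_sharp:
  assumes "\<forall>x y. S (E x) y = S x (E y)"
  shows "dual_map E (S_sharp S x) = S_sharp S (E x)"
  using assms by (simp add: dual_map_def S_sharp_def)

lemma quadratic_ENL_coad_diff_S_sharp:
  assumes "quadratic_ENL sc br E S"
  shows "(\<lambda>z. coad br a (S_sharp S y) z - coad br b (S_sharp S x) z)
    = S_sharp S (br a y + br x b)"
proof -
  interpret S_left: Vector_Spaces.linear sc "(*)" "\<lambda>x. S x y" for y
    using assms by (simp add: quadratic_ENL_def bilinear_map_def)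
  have invariant: "\<forall>x y z. S (br x y) z + S y (br x z) = 0"
    and "lie_algebra sc br"
    using assms unfolding quadratic_ENL_def ENL_algebra_def by blast+
  then have "br b x = - br x b"
    by (intro lie_algebra_anticomm)
  then show ?thesis
    by (simp only: coad_S_sharp[OF invariant]) (simp add: S_sharp_def S_left.add S_left.neg)
qed

theorem proposition6p7:
  fixes sc :: "'k::field_char_0 \<Rightarrow> 'v::ab_group_add \<Rightarrow> 'v"
    and br :: "'v \<Rightarrow> 'v \<Rightarrow> 'v" and E :: "'v \<Rightarrow> 'v" and S :: "'v \<Rightarrow> 'v \<Rightarrow> 'k"
    and K :: "('v \<Rightarrow> 'k) \<Rightarrow> 'v"
  assumes "alg_closed_field TYPE('k)"
    and "fd_vector_space sc"
    and "quadratic_ENL sc br E S"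
    and "dual_linear sc K"
  shows "ENE_relative_RB_coad sc br E K \<longleftrightarrow> RB_weight0_ENL sc br E (K \<circ> S_sharp S)"
proof -
  have bil: "bilinear_map sc (*) S" and nondeg: "\<forall>x. (\<forall>y. S x y = 0) \<longrightarrow> x = 0"
    and self_adjoint: "\<forall>x y. S (E x) y = S x (E y)"
    using assms(3) unfolding quadratic_ENL_def by blast+
  have "vector_space sc"
    using assms(2) by (simp add: fd_vector_space_def)
  then have "Vector_Spaces.linear sc sc (K \<circ> S_sharp S)"
    using bil assms(4) by (rule linear_comp_S_sharp)
  then show ?thesis
    unfolding ENE_relative_RB_coad_def RB_weight0_ENL_def
    using all_is_dual_iff_all_S_sharp[OF assms(2) bil nondeg]
    by (simp add: assms(4) quadratic_ENL_coad_diff_S_sharp[OF assms(3)]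
        dual_map_S_sharp[OF self_adjoint] fun_eq_iff)
qed

end
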